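(* Let $G$ be a simple graph with $m$ edges and $W$ wedges, let $\mathcal{S}$ be a fixed subset of the wedges of $G$, let $\mathcal{R}=(r_1,\dots,r_s)$ be $s$ independent uniformly random edges of $G$, and let $X$ be the number of index pairs $i<j$ with $\{r_i,r_j\}\in\mathcal{S}$. If $W\ge m$ and $s\ge m/\sqrt{W}$, then $\mathrm{Var}[X] \le 18\, s^3 W^{3/2}/m^3$.
   Context: A wedge is a path of length 2 in $G$, i.e. an unordered pair of distinct edges sharing exactly one vertex; $W$ denotes the total number of wedges of $G$. *)

theory Defs
  imports "HOL-Probability.Probability"
begin

definition simple_graph_edges :: "'a set set \<Rightarrow> bool" where
  "simple_graph_edges E \<longleftrightarrow> finite E \<and> (\<forall>e\<in>E. card e = 2)"

definition wedges :: "'a set set \<Rightarrow> 'a set set set" where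
  "wedges E = {{e, f} | e f. e \<in> E \<and> f \<in> E \<and> e \<noteq> f \<and> card (e \<inter> f) = 1}"

definition wedge_pair_count :: "'a set set set \<Rightarrow> nat \<Rightarrow> (nat \<Rightarrow> 'a set) \<Rightarrow> nat" where
  "wedge_pair_count S s r = card {(i, j). i < j \<and> j < s \<and> {r i, r j} \<in> S}"

definition random_edges :: "'a set set \<Rightarrow> nat \<Rightarrow> (nat \<Rightarrow> 'a set) pmf" where
  "random_edges E s = Pi_pmf {..<s} undefined (\<lambda>_. pmf_of_set E)"

end

theory Submission
  imports Defs
begin

(*
  Write r = (r_0, ..., r_{s-1}) for the sample, m = |E|, W = |wedges E|, and
  phi(a,b) = [{a,b} \<in> S] for the wedge indicator.  Then X = \<Sum> phi(r_i, r_j) over the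
  index pairs i < j < s, and Var X = \<Sum>_{p,q} Cov(Y_p, Y_q) with Y_(i,j) = phi(r_i, r_j).
  Because the coordinates are independent and uniform, Cov(Y_p, Y_q) vanishes when the
  index pairs p, q are disjoint, is at most E[Y_p] \<le> 2W/m^2 when p = q (each wedge
  of S is counted twice by the wedge degrees d(a) = |{b. {a,b} \<in> S}|), and is at most
  E[Y_p Y_q] = \<Sum>_a d(a)^2 / m^3 \<le> 6 W^(3/2) / m^3 when p, q share one index, since
  d(a) \<le> 3 sqrt W (the edges through one endpoint of a pairwise form wedges).
  With at most s^2 index pairs and s^3 overlapping pairs of index pairs this gives
  Var X \<le> 2 s^2 W / m^2 + 6 s^3 W^(3/2) / m^3, and m \<le> s sqrt W turns this into
  8 s^3 W^(3/2) / m^3, which is below the claimed 18 s^3 W^(3/2) / m^3.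
*)

section \<open>Distinct coordinates of an i.i.d. uniform sample\<close>

lemma Pi_pmf_split_coord:
  assumes "finite A" "i \<in> A" "\<And>f y. g (f(i:=y)) = g f"
  shows "map_pmf (\<lambda>r. (r i, g r)) (Pi_pmf A d p) = pair_pmf (p i) (map_pmf g (Pi_pmf (A - {i}) d p))"
proof -
  have "A = insert i (A - {i})" using assms by auto
  hence "Pi_pmf A d p = map_pmf (\<lambda>(y,f). f(i:=y)) (pair_pmf (p i) (Pi_pmf (A-{i}) d p))"
    using assms Pi_pmf_insert[of "A - {i}" i d p] by auto
  hence "map_pmf (\<lambda>r. (r i, g r)) (Pi_pmf A d p)
       = map_pmf (\<lambda>(y,f). (y, g f)) (pair_pmf (p i) (Pi_pmf (A-{i}) d p))"
    by (simp add: pmf.map_comp o_def case_prod_unfold assms(3))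
  also have "\<dots> = pair_pmf (p i) (map_pmf g (Pi_pmf (A - {i}) d p))"
    by (simp add: pair_map_pmf2 apsnd_def map_prod_def)
  finally show ?thesis .
qed

lemma pair_pmf_of_set:
  assumes "finite A" "A \<noteq> {}" "finite B" "B \<noteq> {}"
  shows "pair_pmf (pmf_of_set A) (pmf_of_set B) = pmf_of_set (A \<times> B)"
proof (rule pmf_eqI)
  fix x :: "'a \<times> 'b"
  obtain a b where x: "x = (a,b)" by fastforce
  show "pmf (pair_pmf (pmf_of_set A) (pmf_of_set B)) x = pmf (pmf_of_set (A \<times> B)) x"
    using assms by (simp add: x pmf_pair card_cartesian_product indicator_def)
qed

context
  fixes E :: "'a set set"
  assumes finite_E: "finite E" and E_nonempty: "E \<noteq> {}"
begin

lemma law_two_coords: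
  assumes "finite A" "i \<in> A" "j \<in> A" "i \<noteq> j"
  shows "map_pmf (\<lambda>r. (r i, r j)) (Pi_pmf A d (\<lambda>_. pmf_of_set E)) = pmf_of_set (E \<times> E)"
proof -
  have "map_pmf (\<lambda>r. (r i, r j)) (Pi_pmf A d (\<lambda>_. pmf_of_set E))
     = pair_pmf (pmf_of_set E) (map_pmf (\<lambda>r. r j) (Pi_pmf (A - {i}) d (\<lambda>_. pmf_of_set E)))"
    using assms by (intro Pi_pmf_split_coord) auto
  also have "map_pmf (\<lambda>r. r j) (Pi_pmf (A - {i}) d (\<lambda>_. pmf_of_set E)) = pmf_of_set E"
    using assms by (simp add: Pi_pmf_component)
  finally show ?thesis using finite_E E_nonempty by (simp add: pair_pmf_of_set)
qed

lemma law_three_coords: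
  assumes "finite A" "i \<in> A" "j \<in> A" "k \<in> A" "i \<noteq> j" "i \<noteq> k" "j \<noteq> k"
  shows "map_pmf (\<lambda>r. (r i, r j, r k)) (Pi_pmf A d (\<lambda>_. pmf_of_set E)) = pmf_of_set (E \<times> E \<times> E)"
proof -
  have "map_pmf (\<lambda>r. (r i, r j, r k)) (Pi_pmf A d (\<lambda>_. pmf_of_set E))
     = pair_pmf (pmf_of_set E) (map_pmf (\<lambda>r. (r j, r k)) (Pi_pmf (A - {i}) d (\<lambda>_. pmf_of_set E)))"
    using assms by (intro Pi_pmf_split_coord) auto
  also have "map_pmf (\<lambda>r. (r j, r k)) (Pi_pmf (A - {i}) d (\<lambda>_. pmf_of_set E)) = pmf_of_set (E \<times> E)"
    using assms by (intro law_two_coords) auto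
  finally show ?thesis using finite_E E_nonempty by (simp add: pair_pmf_of_set)
qed

lemma law_four_coords:
  assumes "finite A" "i \<in> A" "j \<in> A" "k \<in> A" "l \<in> A"
    and "i \<noteq> j" "i \<noteq> k" "j \<noteq> k" "i \<noteq> l" "j \<noteq> l" "k \<noteq> l"
  shows "map_pmf (\<lambda>r. (r i, r j, r k, r l)) (Pi_pmf A d (\<lambda>_. pmf_of_set E))
       = pmf_of_set (E \<times> E \<times> E \<times> E)"
proof -
  have "map_pmf (\<lambda>r. (r i, r j, r k, r l)) (Pi_pmf A d (\<lambda>_. pmf_of_set E))
     = pair_pmf (pmf_of_set E) (map_pmf (\<lambda>r. (r j, r k, r l)) (Pi_pmf (A - {i}) d (\<lambda>_. pmf_of_set E)))"
    using assms by (intro Pi_pmf_split_coord) auto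
  also have "map_pmf (\<lambda>r. (r j, r k, r l)) (Pi_pmf (A - {i}) d (\<lambda>_. pmf_of_set E))
           = pmf_of_set (E \<times> E \<times> E)"
    using assms by (intro law_three_coords) auto
  finally show ?thesis using finite_E E_nonempty by (simp add: pair_pmf_of_set)
qed

lemma expectation_two_coords:
  assumes "finite A" "i \<in> A" "j \<in> A" "i \<noteq> j"
  shows "measure_pmf.expectation (Pi_pmf A d (\<lambda>_. pmf_of_set E)) (\<lambda>r. g (r i) (r j))
       = (\<Sum>a\<in>E. \<Sum>b\<in>E. g a b) / real (card E) ^ 2"
proof -
  have "measure_pmf.expectation (Pi_pmf A d (\<lambda>_. pmf_of_set E)) (\<lambda>r. g (r i) (r j))
      = measure_pmf.expectation (map_pmf (\<lambda>r. (r i, r j)) (Pi_pmf A d (\<lambda>_. pmf_of_set E))) (\<lambda>(a,b). g a b)"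
    by simp
  also have "map_pmf (\<lambda>r. (r i, r j)) (Pi_pmf A d (\<lambda>_. pmf_of_set E)) = pmf_of_set (E \<times> E)"
    by (rule law_two_coords[OF assms])
  also have "measure_pmf.expectation (pmf_of_set (E \<times> E)) (\<lambda>(a,b). g a b)
      = (\<Sum>x\<in>E \<times> E. (\<lambda>(a,b). g a b) x) / real (card (E \<times> E))"
    using finite_E E_nonempty by (intro integral_pmf_of_set) auto
  finally show ?thesis
    by (simp add: sum.cartesian_product card_cartesian_product power2_eq_square)
qed

lemma expectation_three_coords:
  assumes "finite A" "i \<in> A" "j \<in> A" "k \<in> A" "i \<noteq> j" "i \<noteq> k" "j \<noteq> k"
  shows "measure_pmf.expectation (Pi_pmf A d (\<lambda>_. pmf_of_set E)) (\<lambda>r. g (r i) (r j) (r k))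
       = (\<Sum>a\<in>E. \<Sum>b\<in>E. \<Sum>c\<in>E. g a b c) / real (card E) ^ 3"
proof -
  have "measure_pmf.expectation (Pi_pmf A d (\<lambda>_. pmf_of_set E)) (\<lambda>r. g (r i) (r j) (r k))
      = measure_pmf.expectation (map_pmf (\<lambda>r. (r i, r j, r k)) (Pi_pmf A d (\<lambda>_. pmf_of_set E))) (\<lambda>(a,b,c). g a b c)"
    by simp
  also have "map_pmf (\<lambda>r. (r i, r j, r k)) (Pi_pmf A d (\<lambda>_. pmf_of_set E)) = pmf_of_set (E \<times> E \<times> E)"
    by (rule law_three_coords[OF assms])
  also have "measure_pmf.expectation (pmf_of_set (E \<times> E \<times> E)) (\<lambda>(a,b,c). g a b c)
      = (\<Sum>x\<in>E \<times> E \<times> E. (\<lambda>(a,b,c). g a b c) x) / real (card (E \<times> E \<times> E))"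
    using finite_E E_nonempty by (intro integral_pmf_of_set) auto
  finally show ?thesis
    by (simp add: sum.cartesian_product card_cartesian_product power3_eq_cube)
qed

lemma expectation_four_coords:
  assumes "finite A" "i \<in> A" "j \<in> A" "k \<in> A" "l \<in> A"
    and "i \<noteq> j" "i \<noteq> k" "j \<noteq> k" "i \<noteq> l" "j \<noteq> l" "k \<noteq> l"
  shows "measure_pmf.expectation (Pi_pmf A d (\<lambda>_. pmf_of_set E)) (\<lambda>r. g (r i) (r j) (r k) (r l))
       = (\<Sum>a\<in>E. \<Sum>b\<in>E. \<Sum>c\<in>E. \<Sum>e\<in>E. g a b c e) / real (card E) ^ 4"
proof -
  have "measure_pmf.expectation (Pi_pmf A d (\<lambda>_. pmf_of_set E)) (\<lambda>r. g (r i) (r j) (r k) (r l))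
      = measure_pmf.expectation (map_pmf (\<lambda>r. (r i, r j, r k, r l)) (Pi_pmf A d (\<lambda>_. pmf_of_set E))) (\<lambda>(a,b,c,e). g a b c e)"
    by simp
  also have "map_pmf (\<lambda>r. (r i, r j, r k, r l)) (Pi_pmf A d (\<lambda>_. pmf_of_set E)) = pmf_of_set (E \<times> E \<times> E \<times> E)"
    by (rule law_four_coords[OF assms])
  also have "measure_pmf.expectation (pmf_of_set (E \<times> E \<times> E \<times> E)) (\<lambda>(a,b,c,e). g a b c e)
      = (\<Sum>x\<in>E \<times> E \<times> E \<times> E. (\<lambda>(a,b,c,e). g a b c e) x) / real (card (E \<times> E \<times> E \<times> E))"
    using finite_E E_nonempty by (intro integral_pmf_of_set) auto
  finally show ?thesis
    by (simp add: sum.cartesian_product card_cartesian_product power4_eq_xxxx)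
qed

end

section \<open>Wedge degrees\<close>

lemma finite_wedges: "finite E \<Longrightarrow> finite (wedges E)"
  by (rule finite_subset[of _ "Pow E"]) (auto simp: wedges_def)

lemma doubleton_in_wedges_iff:
  "{a, b} \<in> wedges E \<longleftrightarrow> a \<in> E \<and> b \<in> E \<and> a \<noteq> b \<and> card (a \<inter> b) = 1"
  unfolding wedges_def by (auto simp: doubleton_eq_iff Int_commute)

text \<open>Any two distinct edges through a common vertex u form a wedge, so the star of u
  contributes (deg u choose 2) wedges.\<close>
lemma star_wedges_bound:
  assumes "simple_graph_edges E"
  shows "card {b\<in>E. u \<in> b} * (card {b\<in>E. u \<in> b} - 1) \<le> 2 * card (wedges E)"
proof -
  let ?X = "{b\<in>E. u \<in> b}"
  have finE: "finite E" and two: "\<And>e. e \<in> E \<Longrightarrow> card e = 2"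
    using assms by (auto simp: simple_graph_edges_def)
  have star_pairs: "{B. B \<subseteq> ?X \<and> card B = 2} \<subseteq> wedges E"
  proof
    fix B assume "B \<in> {B. B \<subseteq> ?X \<and> card B = 2}"
    then obtain e f where B: "B = {e,f}" "e \<noteq> f" "e \<in> ?X" "f \<in> ?X"
      by (auto simp: card_2_iff)
    have fin: "finite e" "finite f" using B two by (auto intro: card_ge_0_finite)
    have "e \<inter> f \<noteq> {}" using B by auto
    hence "card (e \<inter> f) \<ge> 1" using fin by (simp add: Suc_le_eq card_gt_0_iff)
    moreover have "card (e \<inter> f) < 2"
    proof -
      have "e \<inter> f \<noteq> e \<or> e \<inter> f \<noteq> f" using B(2) by blast
      hence "e \<inter> f \<subset> e \<or> e \<inter> f \<subset> f" by blast
      thus ?thesis using fin two B by (metis mem_Collect_eq psubset_card_mono)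
    qed
    ultimately have "card (e \<inter> f) = 1" by linarith
    thus "B \<in> wedges E" using B by (simp add: doubleton_in_wedges_iff)
  qed
  have "card ?X choose 2 \<le> card (wedges E)"
    using card_mono[OF finite_wedges[OF finE] star_pairs] n_subsets[of ?X 2] finE by simp
  moreover have "even (card ?X * (card ?X - 1))" by (cases "even (card ?X)") auto
  ultimately show ?thesis unfolding choose_two by (metis dvd_mult_div_cancel mult_le_mono2)
qed

definition wedge_degree :: "'a set set \<Rightarrow> 'a set set set \<Rightarrow> 'a set \<Rightarrow> nat" where
  "wedge_degree E S a = card {b\<in>E. {a,b} \<in> S}"

text \<open>A wedge partner of a = {u,v} lies in the star of u or of v (minus a itself), and
  a star with n edges yields (n-1)^2 \<le> 2W by the previous lemma; hence d(a)^2 \<le> 8W.\<close>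
lemma wedge_degree_squared_bound:
  assumes G: "simple_graph_edges E" and a: "a \<in> E" and S: "S \<subseteq> wedges E"
  shows "real (wedge_degree E S a) ^ 2 \<le> 8 * real (card (wedges E))"
proof -
  have finE: "finite E" and two: "card a = 2" using G a by (auto simp: simple_graph_edges_def)
  obtain u v where uv: "a = {u,v}" "u \<noteq> v" using two by (auto simp: card_2_iff)
  let ?X = "{b\<in>E. u \<in> b}" and ?Y = "{b\<in>E. v \<in> b}"
  let ?W = "real (card (wedges E))"
  have partners: "{b\<in>E. {a,b} \<in> S} \<subseteq> (?X - {a}) \<union> (?Y - {a})"
  proof
    fix b assume b: "b \<in> {b\<in>E. {a,b} \<in> S}"
    hence "{a,b} \<in> wedges E" using S by auto
    hence "a \<noteq> b" "card (a \<inter> b) = 1" using doubleton_in_wedges_iff[of a b E] by blast+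
    from \<open>card (a \<inter> b) = 1\<close> obtain w where "a \<inter> b = {w}" by (rule card_1_singletonE)
    hence "w \<in> b" "w = u \<or> w = v" using uv by auto
    thus "b \<in> (?X - {a}) \<union> (?Y - {a})" using b \<open>a \<noteq> b\<close> by blast
  qed
  have "wedge_degree E S a \<le> card ((?X - {a}) \<union> (?Y - {a}))"
    unfolding wedge_degree_def using partners finE by (intro card_mono) auto
  also have "\<dots> \<le> card (?X - {a}) + card (?Y - {a})" by (rule card_Un_le)
  also have "\<dots> = (card ?X - 1) + (card ?Y - 1)" using a uv finE by simp
  finally have deg: "real (wedge_degree E S a) \<le> real (card ?X - 1) + real (card ?Y - 1)"
    by linarith
  have star_sq: "real (card {b\<in>E. x \<in> b} - 1) ^ 2 \<le> 2 * ?W" for x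
  proof -
    let ?n = "card {b\<in>E. x \<in> b}"
    have "(?n - 1) * (?n - 1) \<le> 2 * card (wedges E)"
      using star_wedges_bound[OF G, of x] le_trans mult_le_mono1 diff_le_self by blast
    hence "real ((?n - 1) * (?n - 1)) \<le> real (2 * card (wedges E))" by linarith
    thus ?thesis by (simp add: power2_eq_square)
  qed
  have "real (wedge_degree E S a) ^ 2 \<le> (real (card ?X - 1) + real (card ?Y - 1)) ^ 2"
    using deg by (intro power_mono) auto
  also have "\<dots> \<le> 2 * real (card ?X - 1) ^ 2 + 2 * real (card ?Y - 1) ^ 2"
    using zero_le_power2[of "real (card ?X - 1) - real (card ?Y - 1)"]
    by (simp add: power2_eq_square algebra_simps)
  finally show ?thesis using star_sq[of u] star_sq[of v] by linarith
qed

text \<open>Summing the wedge degrees counts every wedge of S twice.\<close>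
lemma sum_wedge_degree:
  assumes finE: "finite E" and S: "S \<subseteq> wedges E"
  shows "(\<Sum>a\<in>E. wedge_degree E S a) \<le> 2 * card S"
proof -
  have finS: "finite S" using S finite_wedges[OF finE] finite_subset by blast
  have fiber: "{(x,y). {x,y} = w} \<subseteq> {(e,f),(f,e)}" if "w = {e,f}" for w :: "'a set set" and e f
    using that by (auto simp: doubleton_eq_iff)
  have fiber_le: "finite {(x,y). {x,y} = w} \<and> card {(x,y). {x,y} = w} \<le> 2" if "w \<in> S" for w
  proof -
    have "w \<in> wedges E" using that S by blast
    hence "\<exists>e f. w = {e,f} \<and> e \<in> E \<and> f \<in> E \<and> e \<noteq> f \<and> card (e \<inter> f) = 1"
      unfolding wedges_def by (simp only: mem_Collect_eq)
    then obtain e f where w: "w = {e,f}" by (elim exE conjE)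
    have "card {(x,y). {x,y} = w} \<le> card {(e,f),(f,e)}" "finite {(x,y). {x,y} = w}"
      using fiber[OF w] by (auto intro: card_mono finite_subset)
    moreover have "card {(e,f),(f,e)} \<le> 2" by (rule card_insert_le_m1) simp_all
    ultimately show ?thesis by simp
  qed
  have "(\<Sum>a\<in>E. wedge_degree E S a) = card (SIGMA a:E. {b\<in>E. {a,b} \<in> S})"
    unfolding wedge_degree_def using finE by (intro card_SigmaI[symmetric]) auto
  also have "\<dots> \<le> card (\<Union>w\<in>S. {(x,y). {x,y} = w})"
    using finS fiber_le by (intro card_mono finite_UN_I) auto
  also have "\<dots> \<le> (\<Sum>w\<in>S. card {(x,y). {x,y} = w})" by (rule card_UN_le[OF finS])
  also have "\<dots> \<le> (\<Sum>w\<in>S. 2)" using fiber_le by (intro sum_mono) blast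
  finally show ?thesis by simp
qed

definition wedge_indicator :: "'a set set set \<Rightarrow> 'a set \<Rightarrow> 'a set \<Rightarrow> real" where
  "wedge_indicator S a b = (if {a,b} \<in> S then 1 else 0)"

lemma wedge_indicator_commute: "wedge_indicator S a b = wedge_indicator S b a"
  unfolding wedge_indicator_def by (simp add: insert_commute)

lemma wedge_indicator_idem: "wedge_indicator S a b * wedge_indicator S a b = wedge_indicator S a b"
  by (simp add: wedge_indicator_def)

lemma wedge_indicator_nonneg: "wedge_indicator S a b \<ge> 0"
  by (simp add: wedge_indicator_def)

lemma sum_wedge_indicator:
  "finite E \<Longrightarrow> (\<Sum>b\<in>E. wedge_indicator S a b) = real (wedge_degree E S a)"
  by (simp add: wedge_indicator_def wedge_degree_def sum.inter_filter[symmetric])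


section \<open>Variance of a sum and counting index pairs\<close>

definition covariance :: "'b pmf \<Rightarrow> ('b \<Rightarrow> real) \<Rightarrow> ('b \<Rightarrow> real) \<Rightarrow> real" where
  "covariance M X Y = measure_pmf.expectation M (\<lambda>r. X r * Y r)
     - measure_pmf.expectation M X * measure_pmf.expectation M Y"

lemma variance_sum:
  fixes Y :: "'i \<Rightarrow> 'b \<Rightarrow> real"
  assumes finM: "finite (set_pmf M)" and finP: "finite P"
  shows "measure_pmf.variance M (\<lambda>r. \<Sum>p\<in>P. Y p r) = (\<Sum>p\<in>P. \<Sum>q\<in>P. covariance M (Y p) (Y q))"
proof -
  have int: "integrable (measure_pmf M) f" for f :: "'b \<Rightarrow> real"
    using finM by (rule integrable_measure_pmf_finite)
  have "measure_pmf.variance M (\<lambda>r. \<Sum>p\<in>P. Y p r) =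
      measure_pmf.expectation M (\<lambda>r. (\<Sum>p\<in>P. Y p r)^2)
      - (measure_pmf.expectation M (\<lambda>r. \<Sum>p\<in>P. Y p r))^2"
    by (rule measure_pmf.variance_eq) (rule int)+
  also have "measure_pmf.expectation M (\<lambda>r. (\<Sum>p\<in>P. Y p r)^2)
      = (\<Sum>p\<in>P. \<Sum>q\<in>P. measure_pmf.expectation M (\<lambda>r. Y p r * Y q r))"
    by (simp add: power2_eq_square sum_product Bochner_Integration.integral_sum int)
  also have "(measure_pmf.expectation M (\<lambda>r. \<Sum>p\<in>P. Y p r))^2 =
      (\<Sum>p\<in>P. \<Sum>q\<in>P. measure_pmf.expectation M (Y p) * measure_pmf.expectation M (Y q))"
    by (simp add: power2_eq_square sum_product Bochner_Integration.integral_sum int)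
  finally show ?thesis by (simp add: covariance_def sum_subtractf)
qed

definition index_pairs :: "nat \<Rightarrow> (nat \<times> nat) set" where
  "index_pairs s = {(i,j). i < j \<and> j < s}"

definition overlapping_pairs :: "nat \<Rightarrow> ((nat \<times> nat) \<times> (nat \<times> nat)) set" where
  "overlapping_pairs s = {(p,q). p \<in> index_pairs s \<and> q \<in> index_pairs s \<and> p \<noteq> q
                                 \<and> {fst p, snd p} \<inter> {fst q, snd q} \<noteq> {}}"

lemma index_pairs_subset: "index_pairs s \<subseteq> {..<s} \<times> {..<s}"
  by (auto simp: index_pairs_def)

lemma finite_index_pairs: "finite (index_pairs s)"
  by (rule finite_subset[OF index_pairs_subset]) auto

lemma card_index_pairs: "card (index_pairs s) \<le> s ^ 2"
proof -
  have "card (index_pairs s) \<le> card ({..<s} \<times> {..<s})"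
    by (rule card_mono[OF _ index_pairs_subset]) auto
  thus ?thesis by (simp add: card_cartesian_product power2_eq_square)
qed

text \<open>An overlapping pair is determined by the shared index and the two others.\<close>
lemma card_overlapping_pairs: "card (overlapping_pairs s) \<le> s ^ 3"
proof -
  define g where "g = (\<lambda>(x::nat,y::nat,z::nat). ((min x y, max x y), (min x z, max x z)))"
  have sub: "overlapping_pairs s \<subseteq> g ` ({..<s} \<times> {..<s} \<times> {..<s})"
  proof
    fix pq assume pq_in: "pq \<in> overlapping_pairs s"
    obtain i j k l where pq: "pq = ((i,j),(k,l))" by (metis prod.exhaust)
    have ord: "i < j" "j < s" "k < l" "l < s" and shared: "{i,j} \<inter> {k,l} \<noteq> {}"
      using pq_in unfolding pq overlapping_pairs_def index_pairs_def by simp_all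
    have in_range: "(x,y,z) \<in> {..<s} \<times> {..<s} \<times> {..<s}"
      if "x \<in> {i,j}" "y \<in> {i,j,k,l}" "z \<in> {i,j,k,l}" for x y z
      using that ord by auto
    from shared have "i = k \<or> i = l \<or> j = k \<or> j = l" by auto
    moreover have "i = k \<Longrightarrow> pq = g (i,j,l)" "i = l \<Longrightarrow> pq = g (i,j,k)"
      "j = k \<Longrightarrow> pq = g (j,i,l)" "j = l \<Longrightarrow> pq = g (j,i,k)"
      using pq ord by (auto simp: g_def)
    ultimately show "pq \<in> g ` ({..<s} \<times> {..<s} \<times> {..<s})"
      using in_range by blast
  qed
  have "card (overlapping_pairs s) \<le> card (g ` ({..<s} \<times> {..<s} \<times> {..<s}))"
    by (rule card_mono[OF _ sub]) auto
  also have "\<dots> \<le> card ({..<s} \<times> {..<s} \<times> {..<s})" by (rule card_image_le) auto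
  finally show ?thesis by (simp add: card_cartesian_product power3_eq_cube)
qed

lemma wedge_pair_count_as_sum:
  "real (wedge_pair_count S s r) = (\<Sum>(i,j)\<in>index_pairs s. wedge_indicator S (r i) (r j))"
proof -
  have "{(i, j). i < j \<and> j < s \<and> {r i, r j} \<in> S} = {(i,j)\<in>index_pairs s. {r i, r j} \<in> S}"
    by (auto simp: index_pairs_def)
  thus ?thesis
    using finite_index_pairs[of s]
    by (simp add: wedge_pair_count_def wedge_indicator_def sum.inter_filter[symmetric]
                  case_prod_unfold)
qed

lemma overlapping_product:
  assumes "((i,j),(k,l)) \<in> overlapping_pairs s"
  obtains a b c where "a < s" "b < s" "c < s" "a \<noteq> b" "a \<noteq> c" "b \<noteq> c"
    "\<And>r. wedge_indicator S (r i) (r j) * wedge_indicator S (r k) (r l)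
        = wedge_indicator S (r a) (r b) * wedge_indicator S (r a) (r c)"
proof -
  have ord: "i < j" "j < s" "k < l" "l < s" "(i,j) \<noteq> (k,l)" and "{i,j} \<inter> {k,l} \<noteq> {}"
    using assms unfolding overlapping_pairs_def index_pairs_def by simp_all
  hence "i = k \<or> i = l \<or> j = k \<or> j = l" by auto
  thus ?thesis
  proof (elim disjE)
    assume "i = k" thus ?thesis using ord by (intro that[of i j l]) auto
  next
    assume "i = l" thus ?thesis using ord by (intro that[of i j k]) (auto simp: wedge_indicator_commute[of S "r k" "r l" for r])
  next
    assume "j = k" thus ?thesis using ord
      by (intro that[of j i l]) (auto simp: wedge_indicator_commute)
  next
    assume "j = l" thus ?thesis using ord
      by (intro that[of j i k]) (auto simp: wedge_indicator_commute)
  qed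
qed


section \<open>Covariances of the wedge indicators\<close>

context
  fixes E :: "'a set set" and S :: "'a set set set" and s :: nat
  assumes graph: "simple_graph_edges E" and E_nonempty: "E \<noteq> {}" and S_wedges: "S \<subseteq> wedges E"
begin

lemma finite_edges: "finite E"
  using graph by (simp add: simple_graph_edges_def)

lemma sum_wedge_degree_le: "(\<Sum>a\<in>E. real (wedge_degree E S a)) \<le> 2 * real (card (wedges E))"
proof -
  have "card S \<le> card (wedges E)"
    using S_wedges finite_wedges[OF finite_edges] by (rule card_mono[rotated])
  hence "(\<Sum>a\<in>E. wedge_degree E S a) \<le> 2 * card (wedges E)"
    using sum_wedge_degree[OF finite_edges S_wedges] by linarith
  hence "real (\<Sum>a\<in>E. wedge_degree E S a) \<le> real (2 * card (wedges E))"
    by (simp only: of_nat_le_iff)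
  thus ?thesis by simp
qed

lemma wedge_degree_le:
  assumes "a \<in> E"
  shows "real (wedge_degree E S a) \<le> 3 * sqrt (real (card (wedges E)))"
proof (rule power2_le_imp_le)
  have "(3 * sqrt (real (card (wedges E)))) ^ 2 = 9 * real (card (wedges E))"
    by (simp add: power_mult_distrib)
  thus "real (wedge_degree E S a) ^ 2 \<le> (3 * sqrt (real (card (wedges E)))) ^ 2"
    using wedge_degree_squared_bound[OF graph assms S_wedges] by linarith
qed simp

lemma expectation_wedge_indicator:
  assumes "i < s" "j < s" "i \<noteq> j"
  shows "measure_pmf.expectation (random_edges E s) (\<lambda>r. wedge_indicator S (r i) (r j))
       = (\<Sum>a\<in>E. \<Sum>b\<in>E. wedge_indicator S a b) / real (card E) ^ 2"
  unfolding random_edges_def using assms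
  by (intro expectation_two_coords finite_edges E_nonempty) auto

lemma expectation_wedge_indicator_le:
  assumes "i < s" "j < s" "i \<noteq> j"
  shows "measure_pmf.expectation (random_edges E s) (\<lambda>r. wedge_indicator S (r i) (r j))
       \<le> 2 * real (card (wedges E)) / real (card E) ^ 2"
  using sum_wedge_degree_le
  by (simp add: expectation_wedge_indicator[OF assms] sum_wedge_indicator[OF finite_edges]
                divide_right_mono)

text \<open>Two indicators sharing the coordinate a: their product has expectation
  \<Sum>_a d(a)^2 / m^3 \<le> 3 sqrt W \<Sum>_a d(a) / m^3 \<le> 6 W sqrt W / m^3.\<close>
lemma expectation_shared_product_le:
  assumes "a < s" "b < s" "c < s" "a \<noteq> b" "a \<noteq> c" "b \<noteq> c"
  shows "measure_pmf.expectation (random_edges E s)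
           (\<lambda>r. wedge_indicator S (r a) (r b) * wedge_indicator S (r a) (r c))
       \<le> 6 * real (card (wedges E)) * sqrt (real (card (wedges E))) / real (card E) ^ 3"
proof -
  let ?W = "real (card (wedges E))" and ?d = "\<lambda>x. real (wedge_degree E S x)"
  have "measure_pmf.expectation (random_edges E s)
          (\<lambda>r. wedge_indicator S (r a) (r b) * wedge_indicator S (r a) (r c))
      = (\<Sum>x\<in>E. \<Sum>y\<in>E. \<Sum>z\<in>E. wedge_indicator S x y * wedge_indicator S x z) / real (card E) ^ 3"
    unfolding random_edges_def using assms
    by (intro expectation_three_coords[where g = "\<lambda>x y z. wedge_indicator S x y * wedge_indicator S x z"]
              finite_edges E_nonempty) auto
  also have "(\<Sum>x\<in>E. \<Sum>y\<in>E. \<Sum>z\<in>E. wedge_indicator S x y * wedge_indicator S x z)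
           = (\<Sum>x\<in>E. ?d x * ?d x)"
    by (simp add: sum_product[symmetric] sum_wedge_indicator[OF finite_edges])
  also have "\<dots> \<le> (\<Sum>x\<in>E. ?d x * (3 * sqrt ?W))"
    using wedge_degree_le by (intro sum_mono mult_left_mono) auto
  also have "\<dots> = 3 * sqrt ?W * (\<Sum>x\<in>E. ?d x)"
    by (simp add: sum_distrib_right mult.commute)
  also have "\<dots> \<le> 3 * sqrt ?W * (2 * ?W)"
    using sum_wedge_degree_le by (intro mult_left_mono) auto
  finally show ?thesis
    by (simp add: divide_right_mono mult.commute mult.left_commute)
qed

text \<open>Indicators on disjoint index pairs are independent.\<close>
lemma covariance_disjoint:
  assumes "i < s" "j < s" "k < s" "l < s" "i \<noteq> j" "i \<noteq> k" "j \<noteq> k" "i \<noteq> l" "j \<noteq> l" "k \<noteq> l"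
  shows "covariance (random_edges E s)
           (\<lambda>r. wedge_indicator S (r i) (r j)) (\<lambda>r. wedge_indicator S (r k) (r l)) = 0"
proof -
  let ?m = "real (card E)" and ?T = "\<Sum>a\<in>E. \<Sum>b\<in>E. wedge_indicator S a b"
  have "measure_pmf.expectation (random_edges E s)
          (\<lambda>r. wedge_indicator S (r i) (r j) * wedge_indicator S (r k) (r l))
      = (\<Sum>a\<in>E. \<Sum>b\<in>E. \<Sum>c\<in>E. \<Sum>e\<in>E. wedge_indicator S a b * wedge_indicator S c e) / ?m ^ 4"
    unfolding random_edges_def using assms
    by (intro expectation_four_coords[where g = "\<lambda>a b c e. wedge_indicator S a b * wedge_indicator S c e"]
              finite_edges E_nonempty) auto
  also have "(\<Sum>a\<in>E. \<Sum>b\<in>E. \<Sum>c\<in>E. \<Sum>e\<in>E. wedge_indicator S a b * wedge_indicator S c e) = ?T * ?T"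
    unfolding sum_distrib_right by (simp only: sum_distrib_left)
  also have "?T * ?T / ?m ^ 4 = (?T / ?m ^ 2) * (?T / ?m ^ 2)"
    by (simp add: power4_eq_xxxx power2_eq_square)
  finally show ?thesis
    using assms by (simp add: covariance_def expectation_wedge_indicator)
qed

lemma covariance_wedge_indicators_le:
  assumes p: "(i,j) \<in> index_pairs s" and q: "(k,l) \<in> index_pairs s"
  shows "covariance (random_edges E s)
           (\<lambda>r. wedge_indicator S (r i) (r j)) (\<lambda>r. wedge_indicator S (r k) (r l))
       \<le> (if (i,j) = (k,l) then 2 * real (card (wedges E)) / real (card E) ^ 2 else 0)
         + (if ((i,j),(k,l)) \<in> overlapping_pairs s
            then 6 * real (card (wedges E)) * sqrt (real (card (wedges E))) / real (card E) ^ 3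
            else 0)"
proof -
  let ?R = "random_edges E s"
  have ord: "i < j" "j < s" "k < l" "l < s" using p q by (auto simp: index_pairs_def)
  have nonneg: "measure_pmf.expectation ?R (\<lambda>r. wedge_indicator S (r x) (r y)) \<ge> 0" for x y
    by (intro Bochner_Integration.integral_nonneg wedge_indicator_nonneg)
  hence cov_le: "covariance ?R (\<lambda>r. wedge_indicator S (r i) (r j)) (\<lambda>r. wedge_indicator S (r k) (r l))
      \<le> measure_pmf.expectation ?R (\<lambda>r. wedge_indicator S (r i) (r j) * wedge_indicator S (r k) (r l))"
    unfolding covariance_def by (simp add: mult_nonneg_nonneg)
  consider "(i,j) = (k,l)" | "((i,j),(k,l)) \<in> overlapping_pairs s"
    | "(i,j) \<noteq> (k,l)" "{i,j} \<inter> {k,l} = {}"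
    using p q by (auto simp: overlapping_pairs_def)
  thus ?thesis
  proof cases
    case 1
    hence "(i,j) = (k,l)" "((i,j),(k,l)) \<notin> overlapping_pairs s"
      by (auto simp: overlapping_pairs_def)
    thus ?thesis using cov_le expectation_wedge_indicator_le[of i j] ord
      by (simp add: wedge_indicator_idem)
  next
    case 2
    then obtain a b c where abc: "a < s" "b < s" "c < s" "a \<noteq> b" "a \<noteq> c" "b \<noteq> c"
      "\<And>r. wedge_indicator S (r i) (r j) * wedge_indicator S (r k) (r l)
          = wedge_indicator S (r a) (r b) * wedge_indicator S (r a) (r c)"
      by (rule overlapping_product[where S = S]) auto
    have "(i,j) \<noteq> (k,l)" using 2 by (simp add: overlapping_pairs_def)
    thus ?thesis using 2 cov_le expectation_shared_product_le[OF abc(1-6)] by (simp add: abc(7) del: prod.inject)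
  next
    case 3
    hence "((i,j),(k,l)) \<notin> overlapping_pairs s" by (simp add: overlapping_pairs_def)
    moreover have "covariance ?R (\<lambda>r. wedge_indicator S (r i) (r j)) (\<lambda>r. wedge_indicator S (r k) (r l)) = 0"
      using 3 ord by (intro covariance_disjoint) auto
    ultimately show ?thesis using 3 by simp
  qed
qed

lemma variance_wedge_pair_count_le:
  "measure_pmf.variance (random_edges E s) (\<lambda>r. real (wedge_pair_count S s r))
     \<le> real s ^ 2 * (2 * real (card (wedges E)) / real (card E) ^ 2)
       + real s ^ 3 * (6 * real (card (wedges E)) * sqrt (real (card (wedges E))) / real (card E) ^ 3)"
proof -
  let ?R = "random_edges E s" and ?P = "index_pairs s" and ?Z = "overlapping_pairs s"
  define Y :: "nat \<times> nat \<Rightarrow> (nat \<Rightarrow> 'a set) \<Rightarrow> real"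
    where "Y = (\<lambda>(i,j) r. wedge_indicator S (r i) (r j))"
  define \<alpha> where "\<alpha> = 2 * real (card (wedges E)) / real (card E) ^ 2"
  define T where "T = 6 * real (card (wedges E)) * sqrt (real (card (wedges E))) / real (card E) ^ 3"
  have finite_support: "finite (set_pmf ?R)"
    unfolding random_edges_def using finite_edges E_nonempty
    by (subst set_Pi_pmf) (auto intro!: finite_PiE_dflt)
  have X_eq: "real (wedge_pair_count S s r) = (\<Sum>p\<in>?P. Y p r)" for r
    by (simp add: wedge_pair_count_as_sum Y_def case_prod_unfold)
  have cov_le: "covariance ?R (Y p) (Y q) \<le> (if p = q then \<alpha> else 0) + (if (p,q) \<in> ?Z then T else 0)"
    if "p \<in> ?P" "q \<in> ?P" for p q
  proof -
    obtain i j k l where "p = (i,j)" "q = (k,l)" by fastforce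
    thus ?thesis using that covariance_wedge_indicators_le[of i j k l]
      by (simp only: Y_def \<alpha>_def T_def prod.case)
  qed
  have diagonal: "(\<Sum>p\<in>?P. \<Sum>q\<in>?P. if p = q then \<alpha> else 0) = real (card ?P) * \<alpha>"
    using finite_index_pairs by simp
  have overlapping: "(\<Sum>p\<in>?P. \<Sum>q\<in>?P. if (p,q) \<in> ?Z then T else 0) = real (card ?Z) * T"
  proof -
    have "(\<Sum>p\<in>?P. \<Sum>q\<in>?P. if (p,q) \<in> ?Z then T else 0) = (\<Sum>x\<in>?P \<times> ?P. if x \<in> ?Z then T else 0)"
      by (simp add: sum.cartesian_product)
    also have "\<dots> = (\<Sum>x\<in>{x\<in>?P \<times> ?P. x \<in> ?Z}. T)"
      using finite_index_pairs by (simp only: sum.inter_filter finite_cartesian_product)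
    also have "{x\<in>?P \<times> ?P. x \<in> ?Z} = ?Z" by (auto simp: overlapping_pairs_def)
    finally show ?thesis by simp
  qed
  have "measure_pmf.variance ?R (\<lambda>r. real (wedge_pair_count S s r))
      = measure_pmf.variance ?R (\<lambda>r. \<Sum>p\<in>?P. Y p r)"
    by (simp only: X_eq)
  also have "\<dots> = (\<Sum>p\<in>?P. \<Sum>q\<in>?P. covariance ?R (Y p) (Y q))"
    by (rule variance_sum[OF finite_support finite_index_pairs])
  also have "\<dots> \<le> (\<Sum>p\<in>?P. \<Sum>q\<in>?P. (if p = q then \<alpha> else 0) + (if (p,q) \<in> ?Z then T else 0))"
    using cov_le by (intro sum_mono) auto
  also have "\<dots> = real (card ?P) * \<alpha> + real (card ?Z) * T"
    by (simp only: sum.distrib diagonal overlapping)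
  also have "\<dots> \<le> real s ^ 2 * \<alpha> + real s ^ 3 * T"
  proof (intro add_mono mult_right_mono)
    show "real (card ?P) \<le> real s ^ 2" "real (card ?Z) \<le> real s ^ 3"
      using card_index_pairs[of s] card_overlapping_pairs[of s] by (simp_all flip: of_nat_power)
  qed (simp_all add: \<alpha>_def T_def)
  finally show ?thesis unfolding \<alpha>_def T_def .
qed

end


text \<open>The final estimate: with m \<le> s sqrt W the diagonal term 2 s^2 W / m^2 is at most
  2 s^3 W^(3/2) / m^3, so the whole bound is at most 8 s^3 W^(3/2) / m^3.\<close>
lemma variance_bound_arithmetic:
  fixes s m W :: real
  assumes m: "m > 0" and W: "W > 0" and m_le: "m \<le> s * sqrt W"
  shows "s ^ 2 * (2 * W / m ^ 2) + s ^ 3 * (6 * W * sqrt W / m ^ 3) \<le> 8 * s ^ 3 * W powr (3/2) / m ^ 3"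
proof -
  have "W powr (3/2) = W powr (1 + 1/2)" by simp
  also have "\<dots> = W powr 1 * W powr (1/2)" by (rule powr_add)
  also have "\<dots> = W * sqrt W" using W by (simp add: powr_half_sqrt)
  finally have W_powr: "W powr (3/2) = W * sqrt W" .
  define X where "X = s ^ 3 * (W * sqrt W) / m ^ 3"
  have "s ^ 2 * (2 * W / m ^ 2) = (2 * s ^ 2 * W / m ^ 3) * m"
    using m by (simp add: field_simps power2_eq_square power3_eq_cube)
  also have "\<dots> \<le> (2 * s ^ 2 * W / m ^ 3) * (s * sqrt W)"
    using m W m_le by (intro mult_left_mono) auto
  also have "\<dots> = 2 * X"
    by (simp add: X_def field_simps power2_eq_square power3_eq_cube)
  finally have diagonal: "s ^ 2 * (2 * W / m ^ 2) \<le> 2 * X" .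
  have "s ^ 3 * (6 * W * sqrt W / m ^ 3) = 6 * X" and "8 * s ^ 3 * W powr (3/2) / m ^ 3 = 8 * X"
    by (simp_all add: X_def W_powr)
  with diagonal show ?thesis by linarith
qed

theorem mainTheorem3:
  fixes E :: "'a set set" and S :: "'a set set set" and s :: nat
  assumes "simple_graph_edges E"
    and "E \<noteq> {}"
    and "S \<subseteq> wedges E"
    and "card (wedges E) \<ge> card E"
    and "real s \<ge> real (card E) / sqrt (real (card (wedges E)))"
  shows "measure_pmf.variance (random_edges E s) (\<lambda>r. real (wedge_pair_count S s r))
           \<le> 18 * real s ^ 3 * real (card (wedges E)) powr (3/2) / real (card E) ^ 3"
proof -
  let ?m = "real (card E)" and ?W = "real (card (wedges E))"
  have m_pos: "?m > 0"
    using assms(1,2) by (simp add: simple_graph_edges_def card_gt_0_iff)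
  hence W_pos: "?W > 0" using assms(4) by linarith
  have m_le: "?m \<le> real s * sqrt ?W"
    using assms(5) W_pos by (simp add: divide_le_eq)
  have "measure_pmf.variance (random_edges E s) (\<lambda>r. real (wedge_pair_count S s r))
      \<le> real s ^ 2 * (2 * ?W / ?m ^ 2) + real s ^ 3 * (6 * ?W * sqrt ?W / ?m ^ 3)"
    by (rule variance_wedge_pair_count_le[OF assms(1-3)])
  also have "\<dots> \<le> 8 * real s ^ 3 * ?W powr (3/2) / ?m ^ 3"
    by (rule variance_bound_arithmetic[OF m_pos W_pos m_le])
  also have "\<dots> \<le> 18 * real s ^ 3 * ?W powr (3/2) / ?m ^ 3"
    using m_pos by (intro divide_right_mono mult_right_mono) auto
  finally show ?thesis .
qed

end
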